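(* Let $X$ be a quasigeodesic metric space with bounded geometry (for example a connected graph with uniformly bounded vertex degrees, with its path metric). (i) If $\lim_{l\to\infty}\frac1l\log\big(\sup_{y\in X}|B(y,l)|\big)=0$, then $h_\infty(X)=0$. (ii) If $\limsup_{l\to\infty}\frac1l\log\big(\sup_{y\in X}|B(y,l)|\big)>0$, then $h_\infty(X)=\infty$.
   Context: $B(y,l)$ is the closed ball. $X$ is quasigeodesic if there are $C\ge1,A\ge0$ such that any $x,x'$ are joined by a map $p\colon[0,d(x,x')]\to X$, $p(0)=x$, $p(d(x,x'))=x'$, with $C^{-1}|s-t|-A\le d(p(s),p(t))\le C|s-t|+A$. Bounded geometry: for every $r>0$ closed balls of radius $r$ have uniformly bounded cardinality. Coarse entropy $h_\infty(X)=\lim_{\delta\to\infty}\lim_{R\to\infty}\limsup_{n\to\infty}\frac1n\log s(n,R,\delta,x_0)$, where $s(n,R,\delta,x_0)$ is the supremum of cardinalities of $R$-separated sets of $\delta$-paths $(x_0,\dots,x_n)$ ($d(x_i,x_{i+1})\le\delta$) starting at $x_0$, paths compared by $\max_i d(x_i,y_i)$. *)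

theory Defs
  imports "HOL-Analysis.Analysis"
begin

text \<open>The metric space X is the whole of a type of class metric_space.\<close>

definition quasigeodesic :: "'a::metric_space itself \<Rightarrow> bool" where
  "quasigeodesic _ \<longleftrightarrow> (\<exists>C::real. \<exists>A::real. C \<ge> 1 \<and> A \<ge> 0 \<and>
     (\<forall>x x'::'a. \<exists>p::real \<Rightarrow> 'a. p 0 = x \<and> p (dist x x') = x' \<and>
        (\<forall>s\<in>{0..dist x x'}. \<forall>t\<in>{0..dist x x'}.
           \<bar>s - t\<bar> / C - A \<le> dist (p s) (p t) \<and> dist (p s) (p t) \<le> C * \<bar>s - t\<bar> + A)))"

definition bounded_geometry :: "'a::metric_space itself \<Rightarrow> bool" where
  "bounded_geometry _ \<longleftrightarrow> (\<forall>r>0. \<exists>N::nat. \<forall>y::'a. finite (cball y r) \<and> card (cball y r) \<le> N)"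

definition ball_growth :: "'a::metric_space itself \<Rightarrow> real \<Rightarrow> real" where
  "ball_growth _ l = Sup {real (card (cball (y::'a) l)) | y. True}"

definition delta_paths :: "nat \<Rightarrow> real \<Rightarrow> 'a::metric_space \<Rightarrow> 'a list set" where
  "delta_paths n \<delta> x0 = {xs. length xs = Suc n \<and> xs ! 0 = x0 \<and>
       (\<forall>i<n. dist (xs ! i) (xs ! Suc i) \<le> \<delta>)}"

text \<open>R-separated w.r.t. the distance max_i d(x_i,y_i)\<close>
definition path_separated :: "nat \<Rightarrow> real \<Rightarrow> 'a::metric_space list set \<Rightarrow> bool" where
  "path_separated n R S \<longleftrightarrow> (\<forall>p\<in>S. \<forall>q\<in>S. p \<noteq> q \<longrightarrow> (\<exists>i\<le>n. dist (p ! i) (q ! i) > R))"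

definition sep_count :: "nat \<Rightarrow> real \<Rightarrow> real \<Rightarrow> 'a::metric_space \<Rightarrow> ereal" where
  "sep_count n R \<delta> x0 = Sup {ereal (real (card S)) | S. finite S \<and> S \<subseteq> delta_paths n \<delta> x0 \<and> path_separated n R S}"

definition ereal_ln :: "ereal \<Rightarrow> ereal" where
  "ereal_ln x = (case x of ereal r \<Rightarrow> ereal (ln r) | PInfty \<Rightarrow> \<infinity> | MInfty \<Rightarrow> -\<infinity>)"

definition coarse_entropy :: "'a::metric_space \<Rightarrow> ereal" where
  "coarse_entropy x0 = Lim at_top (\<lambda>\<delta>::real. Lim at_top (\<lambda>R::real.
       limsup (\<lambda>n. ereal_ln (sep_count n R \<delta> x0) / ereal (real n))))"

end

theory Submission
  imports Defs
begin

text \<open>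
  (i) Sample a \<open>\<delta>\<close>-path at the times \<open>0, k, 2k, \<dots>\<close> with \<open>2k\<delta> \<le> R\<close>. Between samples a path moves
  less than \<open>R/2\<close>, so \<open>R\<close>-separated paths have distinct samples, and the samples form a
  \<open>k\<delta>\<close>-path of length \<open>n/k + 1\<close>. Hence there are at most \<open>|B(k\<delta>)|^(n/k+1)\<close> of them, and the
  entropy at scales \<open>\<delta>, R\<close> is at most \<open>\<delta> \<cdot> ln |B(k\<delta>)| / (k\<delta>)\<close>, which tends to \<open>0\<close> with \<open>R\<close>.

  (ii) Suppose \<open>ln |B(y,l)| \<ge> c l\<close> for arbitrarily large \<open>l\<close>. A maximal \<open>R\<close>-separated subset \<open>Z\<close>
  of \<open>B(y,l)\<close> has at least \<open>|B(y,l)| / |B(R)|\<close> points. Quasigeodesics discretised with step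
  \<open>\<tau>\<close> are \<open>\<delta>\<close>-paths for \<open>\<delta> = C\<tau> + A\<close>, so a round trip from \<open>y\<close> to a point of \<open>Z\<close> and back
  takes about \<open>2l/\<tau>\<close> steps; concatenating round trips gives \<open>|Z|^(n\<tau>/2l)\<close> separated paths,
  i.e. entropy at least \<open>c\<tau>/4\<close>, which is unbounded as \<open>\<delta>\<close> grows.
\<close>

section \<open>Balls in spaces of bounded geometry\<close>

lemma bounded_geometry_cball_bound:
  assumes "bounded_geometry TYPE('a::metric_space)"
  obtains N where "\<And>y::'a. finite (cball y r)" "\<And>y::'a. card (cball y r) \<le> N"
proof -
  obtain N where N: "\<And>y::'a. finite (cball y (max r 1)) \<and> card (cball y (max r 1)) \<le> N"
    using assms unfolding bounded_geometry_def by (meson less_max_iff_disj zero_less_one)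
  have sub: "cball y r \<subseteq> cball y (max r 1)" for y :: 'a
    by auto
  show thesis
  proof
    show "finite (cball y r)" for y :: 'a
      using N sub by (meson finite_subset)
    show "card (cball y r) \<le> N" for y :: 'a
      using N sub by (meson card_mono order_trans)
  qed
qed

lemma finite_cball_bounded_geometry:
  assumes "bounded_geometry TYPE('a::metric_space)"
  shows "finite (cball (y::'a) r)"
proof -
  obtain N where "\<And>y::'a. finite (cball y r)"
    using bounded_geometry_cball_bound[OF assms] by blast
  then show ?thesis .
qed

lemma finite_cball_cards:
  assumes "bounded_geometry TYPE('a::metric_space)"
  shows "finite {real (card (cball (y::'a) l)) | y. True}"
proof -
  obtain N where "\<And>y::'a. card (cball y l) \<le> N"
    using bounded_geometry_cball_bound[OF assms] by blast
  then have "{real (card (cball (y::'a) l)) | y. True} \<subseteq> real ` {0..N}"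
    by auto
  then show ?thesis
    by (rule finite_subset) simp
qed

lemma card_cball_le_ball_growth:
  assumes "bounded_geometry TYPE('a::metric_space)"
  shows "real (card (cball (y::'a) l)) \<le> ball_growth TYPE('a) l"
  unfolding ball_growth_def
  by (rule cSup_upper) (use bdd_above_finite[OF finite_cball_cards[OF assms]] in auto)

lemma ball_growth_attained:
  assumes "bounded_geometry TYPE('a::metric_space)"
  obtains y where "real (card (cball (y::'a) l)) = ball_growth TYPE('a) l"
proof -
  let ?S = "{real (card (cball (y::'a) l)) | y. True}"
  have fin: "finite ?S" and ne: "?S \<noteq> {}"
    using finite_cball_cards[OF assms] by auto
  have "Sup ?S \<in> ?S"
    unfolding cSup_eq_Max[OF fin ne] by (rule Max_in[OF fin ne])
  then show thesis
    using that unfolding ball_growth_def by auto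
qed

lemma ball_growth_ge_1:
  assumes "bounded_geometry TYPE('a::metric_space)" "0 \<le> l"
  shows "1 \<le> ball_growth TYPE('a) l"
proof -
  obtain y :: 'a where y: "real (card (cball y l)) = ball_growth TYPE('a) l"
    using ball_growth_attained[OF assms(1)] .
  have "cball y l \<noteq> {}"
    using assms(2) centre_in_cball by blast
  then have "card (cball y l) \<ge> 1"
    using finite_cball_bounded_geometry[OF assms(1)] by (simp add: Suc_le_eq card_gt_0_iff)
  then show ?thesis
    using y by linarith
qed

section \<open>Counting \<open>\<delta>\<close>-paths\<close>

lemma map_upt_in_delta_paths:
  assumes "f 0 = x0" and "\<And>i. i < n \<Longrightarrow> dist (f i) (f (Suc i)) \<le> \<delta>"
  shows "map f [0..<Suc n] \<in> delta_paths n \<delta> x0"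
  using assms unfolding delta_paths_def by (auto simp del: upt_Suc simp: nth_map_upt)

lemma dist_delta_path_le:
  assumes xs: "xs \<in> delta_paths n \<delta> x0" and "i \<le> j" "j \<le> n"
  shows "dist (xs ! i) (xs ! j) \<le> real (j - i) * \<delta>"
  using \<open>i \<le> j\<close> \<open>j \<le> n\<close>
proof (induction j rule: dec_induct)
  case (step j)
  have "dist (xs ! i) (xs ! Suc j) \<le> dist (xs ! i) (xs ! j) + dist (xs ! j) (xs ! Suc j)"
    by (rule dist_triangle)
  also have "\<dots> \<le> real (j - i) * \<delta> + \<delta>"
    using step xs unfolding delta_paths_def by (intro add_mono) auto
  also have "\<dots> = real (Suc j - i) * \<delta>"
    using step.hyps by (simp add: Suc_diff_le algebra_simps)
  finally show ?case .
qed simp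

lemma delta_paths_Suc_subset:
  "delta_paths (Suc n) \<delta> x0 \<subseteq> (\<lambda>(ys, z). ys @ [z]) ` (SIGMA ys:delta_paths n \<delta> x0. cball (last ys) \<delta>)"
proof
  fix xs assume xs: "xs \<in> delta_paths (Suc n) \<delta> x0"
  then have len: "length xs = Suc (Suc n)"
    unfolding delta_paths_def by auto
  define ys where "ys = butlast xs"
  have xs_eq: "xs = ys @ [xs ! Suc n]"
    unfolding ys_def using len by (metis append_butlast_last_id last_conv_nth diff_Suc_1 list.size(3) nat.distinct(1))
  have ys_nth: "ys ! i = xs ! i" if "i < Suc n" for i
    unfolding ys_def using that len by (simp add: nth_butlast)
  have ys_len: "length ys = Suc n"
    unfolding ys_def using len by simp
  have "ys \<in> delta_paths n \<delta> x0"
    using xs ys_len ys_nth unfolding delta_paths_def by auto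
  moreover have "last ys = xs ! n"
    using ys_len ys_nth[of n] by (metis last_conv_nth diff_Suc_1 list.size(3) nat.distinct(1) lessI)
  moreover have "dist (xs ! n) (xs ! Suc n) \<le> \<delta>"
    using xs unfolding delta_paths_def by auto
  ultimately show "xs \<in> (\<lambda>(ys, z). ys @ [z]) ` (SIGMA ys:delta_paths n \<delta> x0. cball (last ys) \<delta>)"
    by (subst xs_eq, intro image_eqI[of _ _ "(ys, xs ! Suc n)"]) auto
qed

lemma card_delta_paths_le:
  assumes bg: "bounded_geometry TYPE('a::metric_space)"
  shows "finite (delta_paths n \<delta> (x0::'a)) \<and> real (card (delta_paths n \<delta> x0)) \<le> ball_growth TYPE('a) \<delta> ^ n"
proof (induction n)
  case 0
  have "delta_paths 0 \<delta> x0 = {[x0]}"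
    unfolding delta_paths_def by (auto simp: length_Suc_conv)
  then show ?case
    by simp
next
  case (Suc n)
  let ?D = "delta_paths n \<delta> x0" and ?G = "ball_growth TYPE('a) \<delta>"
  let ?S = "SIGMA ys:?D. cball (last ys) \<delta>"
  have fin: "finite ?S"
    using Suc.IH finite_cball_bounded_geometry[OF bg] by auto
  have "real (card ?S) = (\<Sum>ys\<in>?D. real (card (cball (last ys) \<delta>)))"
    using Suc.IH finite_cball_bounded_geometry[OF bg] by (simp add: card_SigmaI)
  also have "\<dots> \<le> real (card ?D) * ?G"
    using sum_mono[of ?D "\<lambda>ys. real (card (cball (last ys) \<delta>))" "\<lambda>_. ?G"]
    by (simp add: card_cball_le_ball_growth[OF bg])
  also have "\<dots> \<le> ?G ^ n * ?G"
    using Suc.IH card_cball_le_ball_growth[OF bg, of x0 \<delta>] by (intro mult_right_mono) auto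
  finally have "real (card ?S) \<le> ?G ^ Suc n"
    by (simp add: mult.commute)
  moreover have "card (delta_paths (Suc n) \<delta> x0) \<le> card ?S"
    using card_mono[OF finite_imageI[OF fin] delta_paths_Suc_subset] card_image_le[OF fin]
    by (rule order_trans)
  ultimately show ?case
    using finite_subset[OF delta_paths_Suc_subset] fin by fastforce
qed

section \<open>Growth rate of separated families of \<open>\<delta>\<close>-paths\<close>

definition sep_rate :: "real \<Rightarrow> real \<Rightarrow> 'a::metric_space \<Rightarrow> ereal" where
  "sep_rate R \<delta> x0 = limsup (\<lambda>n. ereal_ln (sep_count n R \<delta> x0) / ereal (real n))"

lemma coarse_entropy_eq_Lim_sep_rate:
  "coarse_entropy x0 = Lim at_top (\<lambda>\<delta>. Lim at_top (\<lambda>R. sep_rate R \<delta> x0))"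
  unfolding coarse_entropy_def sep_rate_def ..

lemma ereal_ln_ereal [simp]: "ereal_ln (ereal r) = ereal (ln r)"
  by (simp add: ereal_ln_def)

lemma ereal_ln_mono: "1 \<le> a \<Longrightarrow> a \<le> b \<Longrightarrow> ereal_ln a \<le> ereal_ln b"
  by (cases a; cases b) (auto simp: ereal_ln_def)

lemma ereal_ln_nonneg: "1 \<le> a \<Longrightarrow> 0 \<le> ereal_ln a"
  by (cases a) (auto simp: ereal_ln_def)

lemma card_le_sep_count:
  assumes "finite I" "0 \<le> R"
    and paths: "\<And>c. c \<in> I \<Longrightarrow> F c \<in> delta_paths n \<delta> x0"
    and far: "\<And>c c'. c \<in> I \<Longrightarrow> c' \<in> I \<Longrightarrow> c \<noteq> c' \<Longrightarrow> \<exists>i\<le>n. R < dist (F c ! i) (F c' ! i)"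
  shows "ereal (real (card I)) \<le> sep_count n R \<delta> x0"
proof -
  have "inj_on F I"
    using far \<open>0 \<le> R\<close> by (fastforce intro: inj_onI)
  then have "card (F ` I) = card I"
    by (rule card_image)
  moreover have "path_separated n R (F ` I)"
    using far unfolding path_separated_def by blast
  ultimately show ?thesis
    unfolding sep_count_def using paths \<open>finite I\<close> by (intro Sup_upper) (auto intro!: exI[of _ "F ` I"])
qed

lemma sep_count_ge_1:
  assumes "0 \<le> \<delta>"
  shows "1 \<le> sep_count n R \<delta> x0"
proof -
  have "replicate (Suc n) x0 \<in> delta_paths n \<delta> x0"
    using assms unfolding delta_paths_def by (auto simp del: replicate_Suc)
  then have "ereal (real (card {replicate (Suc n) x0})) \<le> sep_count n R \<delta> x0"
    unfolding sep_count_def path_separated_def by (intro Sup_upper) blast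
  then show ?thesis
    by (simp add: one_ereal_def)
qed

lemma sep_count_antimono:
  assumes "R \<le> R'"
  shows "sep_count n R' \<delta> x0 \<le> sep_count n R \<delta> x0"
proof -
  have "path_separated n R S" if "path_separated n R' S" for S :: "'a list set"
    using that assms unfolding path_separated_def by (meson le_less_trans)
  then show ?thesis
    unfolding sep_count_def by (intro Sup_subset_mono) blast
qed

lemma sep_rate_nonneg:
  assumes "0 \<le> \<delta>"
  shows "0 \<le> sep_rate R \<delta> x0"
  unfolding sep_rate_def
  by (intro le_Limsup always_eventually allI zero_le_divide_ereal ereal_ln_nonneg sep_count_ge_1 assms)
    simp_all

lemma sep_rate_antimono:
  assumes "R \<le> R'" "0 \<le> \<delta>"
  shows "sep_rate R' \<delta> x0 \<le> sep_rate R \<delta> x0"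
  unfolding sep_rate_def
proof (intro Limsup_mono eventually_sequentiallyI[of 1])
  fix n :: nat assume "1 \<le> n"
  then show "ereal_ln (sep_count n R' \<delta> x0) / ereal (real n) \<le> ereal_ln (sep_count n R \<delta> x0) / ereal (real n)"
    by (intro ereal_divide_right_mono ereal_ln_mono sep_count_ge_1 sep_count_antimono assms) auto
qed

lemma sep_rate_tendsto_INF:
  assumes "0 \<le> \<delta>"
  shows "((\<lambda>R. sep_rate R \<delta> x0) \<longlongrightarrow> (INF R. sep_rate R \<delta> x0)) at_top"
proof (rule decreasing_tendsto)
  show "\<forall>\<^sub>F R in at_top. (INF R. sep_rate R \<delta> x0) \<le> sep_rate R \<delta> x0"
    by (intro always_eventually allI INF_lower) simp
next
  fix x assume "(INF R. sep_rate R \<delta> x0) < x"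
  then obtain R0 where "sep_rate R0 \<delta> x0 < x"
    by (auto simp: INF_less_iff)
  then have "\<forall>R\<ge>R0. sep_rate R \<delta> x0 < x"
    using sep_rate_antimono[OF _ assms] le_less_trans by blast
  then show "\<forall>\<^sub>F R in at_top. sep_rate R \<delta> x0 < x"
    unfolding eventually_at_top_linorder by blast
qed

lemma limsup_ln_div_le_of_pow_bound:
  fixes s :: "nat \<Rightarrow> ereal"
  assumes ge: "\<And>n. 1 \<le> s n" and le: "\<And>n. s n \<le> ereal (B ^ (n div k + 1))" and "1 \<le> k"
  shows "limsup (\<lambda>n. ereal_ln (s n) / ereal (real n)) \<le> ereal (ln B / real k)"
proof -
  have "1 \<le> B"
    using order_trans[OF ge le, of 0] by (simp add: one_ereal_def)
  then have lnB: "0 \<le> ln B"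
    by simp
  have "\<forall>\<^sub>F n in sequentially. ereal_ln (s n) / ereal (real n) \<le> ereal (ln B / real k + ln B / real n)"
  proof (rule eventually_sequentiallyI[of 1])
    fix n :: nat assume n: "1 \<le> n"
    have "ereal_ln (s n) / ereal (real n) \<le> ereal (ln (B ^ (n div k + 1))) / ereal (real n)"
      using ereal_ln_mono[OF ge le, of n] n by (intro ereal_divide_right_mono) auto
    also have "\<dots> = ereal (real (n div k + 1) * ln B / real n)"
      using \<open>1 \<le> B\<close> n by (subst ln_realpow) auto
    also have "real (n div k + 1) * ln B / real n \<le> (real n / real k + 1) * ln B / real n"
      using of_nat_div_le_of_nat[of n k] lnB by (intro divide_right_mono mult_right_mono) auto
    also have "\<dots> = ln B / real k + ln B / real n"
      using n by (simp add: field_simps)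
    finally show "ereal_ln (s n) / ereal (real n) \<le> ereal (ln B / real k + ln B / real n)"
      by simp
  qed
  then have "limsup (\<lambda>n. ereal_ln (s n) / ereal (real n)) \<le> limsup (\<lambda>n. ereal (ln B / real k + ln B / real n))"
    by (rule Limsup_mono)
  also have "\<dots> = ereal (ln B / real k)"
    by (intro lim_imp_Limsup tendsto_intros lim_const_over_n[THEN tendsto_add[OF tendsto_const], simplified]) simp
  finally show ?thesis .
qed

lemma limsup_ln_div_ge_of_pow_bound:
  fixes s :: "nat \<Rightarrow> ereal"
  assumes ge: "\<And>n. m \<le> n \<Longrightarrow> ereal (real (N ^ ((n - m) div k))) \<le> s n" and "1 \<le> N" "1 \<le> k"
  shows "ereal (ln (real N) / real k) \<le> limsup (\<lambda>n. ereal_ln (s n) / ereal (real n))"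
proof -
  define a where "a = (real m / real k + 1) * ln (real N)"
  have lnN: "0 \<le> ln (real N)"
    using \<open>1 \<le> N\<close> by simp
  have "\<forall>\<^sub>F n in sequentially. ereal (ln (real N) / real k - a / real n) \<le> ereal_ln (s n) / ereal (real n)"
  proof (rule eventually_sequentiallyI[of "max m 1"])
    fix n assume n: "max m 1 \<le> n"
    define J where "J = (n - m) div k"
    have "real (n - m) / real k - 1 \<le> real J"
      using real_of_int_floor_gt_diff_one[of "real (n - m) / real k"]
      unfolding J_def floor_divide_of_nat_eq by simp
    then have "(real (n - m) / real k - 1) * ln (real N) / real n \<le> real J * ln (real N) / real n"
      using lnN by (intro divide_right_mono mult_right_mono) auto
    moreover have "(real (n - m) / real k - 1) * ln (real N) / real n = ln (real N) / real k - a / real n"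
      unfolding a_def using n \<open>1 \<le> k\<close> by (simp add: of_nat_diff field_simps)
    ultimately have "ereal (ln (real N) / real k - a / real n) \<le> ereal (ln (real (N ^ J))) / ereal (real n)"
      using n \<open>1 \<le> N\<close> by (simp add: ln_realpow)
    also have "\<dots> \<le> ereal_ln (s n) / ereal (real n)"
      using ereal_ln_mono[OF _ ge[of n]] n \<open>1 \<le> N\<close> unfolding J_def
      by (intro ereal_divide_right_mono) (auto simp: one_ereal_def)
    finally show "ereal (ln (real N) / real k - a / real n) \<le> ereal_ln (s n) / ereal (real n)" .
  qed
  then have "limsup (\<lambda>n. ereal (ln (real N) / real k - a / real n)) \<le> limsup (\<lambda>n. ereal_ln (s n) / ereal (real n))"
    by (rule Limsup_mono)
  moreover have "limsup (\<lambda>n. ereal (ln (real N) / real k - a / real n)) = ereal (ln (real N) / real k)"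
    by (intro lim_imp_Limsup tendsto_intros lim_const_over_n[THEN tendsto_diff[OF tendsto_const], simplified]) simp
  ultimately show ?thesis
    by simp
qed

section \<open>Subexponential growth gives zero coarse entropy\<close>

lemma dist_delta_paths_le_of_sample_eq:
  assumes p: "p \<in> delta_paths n \<delta> x0" and q: "q \<in> delta_paths n \<delta> x0'"
    and "i \<le> n" "0 < k" "0 \<le> \<delta>" and "p ! (i div k * k) = q ! (i div k * k)"
  shows "dist (p ! i) (q ! i) \<le> 2 * (real (k - 1) * \<delta>)"
proof -
  have le: "i div k * k \<le> i"
    by (rule div_times_less_eq_dividend)
  have "i - i div k * k < k"
    unfolding minus_div_mult_eq_mod using \<open>0 < k\<close> by simp
  then have close: "real (i - i div k * k) * \<delta> \<le> real (k - 1) * \<delta>"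
    using \<open>0 \<le> \<delta>\<close> by (intro mult_right_mono of_nat_mono) simp_all
  have "dist (p ! i) (q ! i) \<le> dist (p ! (i div k * k)) (p ! i) + dist (q ! (i div k * k)) (q ! i)"
    using assms(6) by (metis dist_commute dist_triangle)
  also have "\<dots> \<le> 2 * (real (k - 1) * \<delta>)"
    using dist_delta_path_le[OF p le \<open>i \<le> n\<close>] dist_delta_path_le[OF q le \<open>i \<le> n\<close>] close by linarith
  finally show ?thesis .
qed

lemma sample_in_delta_paths:
  assumes p: "p \<in> delta_paths n \<delta> x0" and "0 \<le> \<delta>"
  shows "map (\<lambda>j. p ! min (j * k) n) [0..<Suc J] \<in> delta_paths J (real k * \<delta>) x0"
proof (rule map_upt_in_delta_paths)
  show "p ! min (0 * k) n = x0"
    using p unfolding delta_paths_def by auto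
  fix j
  have "min (Suc j * k) n - min (j * k) n \<le> k"
    by (auto simp: min_def)
  then have "real (min (Suc j * k) n - min (j * k) n) * \<delta> \<le> real k * \<delta>"
    using \<open>0 \<le> \<delta>\<close> by (intro mult_right_mono) auto
  then show "dist (p ! min (j * k) n) (p ! min (Suc j * k) n) \<le> real k * \<delta>"
    using dist_delta_path_le[OF p, of "min (j * k) n" "min (Suc j * k) n"]
    by (auto simp: min_def)
qed

lemma sep_count_le_ball_growth_pow:
  assumes bg: "bounded_geometry TYPE('a::metric_space)"
    and "0 < \<delta>" "1 \<le> k" and kR: "2 * real k * \<delta> \<le> R"
  shows "sep_count n R \<delta> (x0::'a) \<le> ereal (ball_growth TYPE('a) (real k * \<delta>) ^ (n div k + 1))"
  unfolding sep_count_def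
proof (rule Sup_least, clarify)
  fix S assume "finite S" and S: "S \<subseteq> delta_paths n \<delta> x0" and sep: "path_separated n R S"
  define J where "J = n div k + 1"
  define sample where "sample p = map (\<lambda>j. p ! min (j * k) n) [0..<Suc J]" for p :: "'a list"
  have sample_path: "sample p \<in> delta_paths J (real k * \<delta>) x0" if "p \<in> S" for p
    unfolding sample_def using that S \<open>0 < \<delta>\<close> by (intro sample_in_delta_paths) auto
  have "inj_on sample S"
  proof (rule inj_onI, rule ccontr)
    fix p q assume "p \<in> S" "q \<in> S" and eq: "sample p = sample q" and "p \<noteq> q"
    then obtain i where i: "i \<le> n" "R < dist (p ! i) (q ! i)"
      using sep unfolding path_separated_def by blast
    have "i div k < Suc J"
      unfolding J_def using div_le_mono[OF i(1), of k] by (simp add: le_imp_less_Suc)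
    then have "p ! (i div k * k) = q ! (i div k * k)"
      using arg_cong[OF eq, of "\<lambda>xs. xs ! (i div k)"] i(1) div_times_less_eq_dividend[of i k]
      unfolding sample_def by (simp del: upt_Suc)
    then have "dist (p ! i) (q ! i) \<le> 2 * (real (k - 1) * \<delta>)"
      using \<open>p \<in> S\<close> \<open>q \<in> S\<close> S i(1) \<open>0 < \<delta>\<close> \<open>1 \<le> k\<close>
      by (intro dist_delta_paths_le_of_sample_eq) auto
    also have "\<dots> < R"
      using kR \<open>0 < \<delta>\<close> \<open>1 \<le> k\<close> by (simp add: of_nat_diff algebra_simps)
    finally show False
      using i(2) by simp
  qed
  then have "card S = card (sample ` S)"
    by (simp add: card_image)
  also have "\<dots> \<le> card (delta_paths J (real k * \<delta>) x0)"
    using card_delta_paths_le[OF bg] sample_path by (intro card_mono) auto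
  finally show "ereal (real (card S)) \<le> ereal (ball_growth TYPE('a) (real k * \<delta>) ^ (n div k + 1))"
    using card_delta_paths_le[OF bg, of J "real k * \<delta>" x0] unfolding J_def by simp
qed

lemma sep_rate_le:
  assumes bg: "bounded_geometry TYPE('a::metric_space)"
    and "0 < \<delta>" "1 \<le> k" "2 * real k * \<delta> \<le> R"
  shows "sep_rate R \<delta> (x0::'a) \<le> ereal (ln (ball_growth TYPE('a) (real k * \<delta>)) / real k)"
  unfolding sep_rate_def using assms \<open>1 \<le> k\<close>
  by (intro limsup_ln_div_le_of_pow_bound sep_count_ge_1 sep_count_le_ball_growth_pow) auto

lemma nat_floor_divide_bounds:
  fixes d x :: real
  assumes "0 < d" "d \<le> x"
  shows "1 \<le> nat \<lfloor>x / d\<rfloor>" "real (nat \<lfloor>x / d\<rfloor>) * d \<le> x" "x - d \<le> real (nat \<lfloor>x / d\<rfloor>) * d"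
proof -
  have "1 \<le> x / d"
    using assms by simp
  then have k: "real (nat \<lfloor>x / d\<rfloor>) = real_of_int \<lfloor>x / d\<rfloor>"
    by linarith
  show "1 \<le> nat \<lfloor>x / d\<rfloor>"
    using \<open>1 \<le> x / d\<close> by linarith
  have "real_of_int \<lfloor>x / d\<rfloor> * d \<le> x / d * d" "(x / d - 1) * d \<le> real_of_int \<lfloor>x / d\<rfloor> * d"
    using \<open>0 < d\<close> real_of_int_floor_gt_diff_one[of "x / d"] by (intro mult_right_mono; simp)+
  then show "real (nat \<lfloor>x / d\<rfloor>) * d \<le> x" "x - d \<le> real (nat \<lfloor>x / d\<rfloor>) * d"
    unfolding k using \<open>0 < d\<close> by (simp_all add: algebra_simps)
qed

lemma sep_rate_tendsto_0:
  assumes bg: "bounded_geometry TYPE('a::metric_space)"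
    and subexp: "((\<lambda>l. ln (ball_growth TYPE('a) l) / l) \<longlongrightarrow> 0) at_top"
    and "0 < \<delta>"
  shows "((\<lambda>R. sep_rate R \<delta> (x0::'a)) \<longlongrightarrow> 0) at_top"
proof -
  define h where "h l = ln (ball_growth TYPE('a) l) / l" for l
  define k where "k R = nat \<lfloor>R / (2 * \<delta>)\<rfloor>" for R
  have k: "1 \<le> k R" "2 * real (k R) * \<delta> \<le> R" "R / 2 - \<delta> \<le> real (k R) * \<delta>" if "2 * \<delta> \<le> R" for R
    using nat_floor_divide_bounds[of "2 * \<delta>" R] that \<open>0 < \<delta>\<close> unfolding k_def by (auto simp: algebra_simps)
  have "filterlim (\<lambda>R. real (k R) * \<delta>) at_top at_top"
  proof (rule filterlim_at_top_mono[of "\<lambda>R. R / 2 - \<delta>"])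
    show "\<forall>\<^sub>F R in at_top. R / 2 - \<delta> \<le> real (k R) * \<delta>"
      using eventually_ge_at_top[of "2 * \<delta>"] by eventually_elim (rule k(3))
  qed real_asymp
  then have "((\<lambda>R. \<delta> * h (real (k R) * \<delta>)) \<longlongrightarrow> \<delta> * 0) at_top"
    by (intro tendsto_mult tendsto_const filterlim_compose[OF subexp[folded h_def]])
  then have lim: "((\<lambda>R. ereal (\<delta> * h (real (k R) * \<delta>))) \<longlongrightarrow> 0) at_top"
    by (simp add: zero_ereal_def)
  have upper: "\<forall>\<^sub>F R in at_top. sep_rate R \<delta> x0 \<le> ereal (\<delta> * h (real (k R) * \<delta>))"
    using eventually_ge_at_top[of "2 * \<delta>"]
  proof eventually_elim
    case (elim R)
    then show ?case
      using sep_rate_le[OF bg \<open>0 < \<delta>\<close> k(1,2)[OF elim], of x0] k(1)[OF elim] \<open>0 < \<delta>\<close>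
      unfolding h_def by (simp add: field_simps)
  qed
  have lower: "\<forall>\<^sub>F R in at_top. 0 \<le> sep_rate R \<delta> x0"
    using \<open>0 < \<delta>\<close> by (intro always_eventually allI sep_rate_nonneg) simp
  show ?thesis
    by (rule tendsto_sandwich[OF lower upper tendsto_const lim])
qed

lemma coarse_entropy_eq_0:
  assumes "bounded_geometry TYPE('a::metric_space)"
    and "((\<lambda>l. ln (ball_growth TYPE('a) l) / l) \<longlongrightarrow> 0) at_top"
  shows "coarse_entropy (x0::'a) = 0"
proof -
  have "\<forall>\<^sub>F \<delta> in at_top. Lim at_top (\<lambda>R. sep_rate R \<delta> x0) = 0"
    using eventually_gt_at_top[of 0]
    by eventually_elim (intro tendsto_Lim sep_rate_tendsto_0 assms; simp)
  then have "((\<lambda>\<delta>. Lim at_top (\<lambda>R. sep_rate R \<delta> x0)) \<longlongrightarrow> 0) at_top"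
    by (rule tendsto_eventually)
  then show ?thesis
    unfolding coarse_entropy_eq_Lim_sep_rate by (intro tendsto_Lim) auto
qed

section \<open>Exponential growth gives infinite coarse entropy\<close>

definition separated :: "real \<Rightarrow> 'a::metric_space set \<Rightarrow> bool" where
  "separated R Z \<longleftrightarrow> (\<forall>z\<in>Z. \<forall>z'\<in>Z. z \<noteq> z' \<longrightarrow> R < dist z z')"

lemma card_le_card_net_mult_ball_growth:
  assumes "bounded_geometry TYPE('a::metric_space)"
    and "finite Z" and cover: "\<forall>b\<in>B. \<exists>z\<in>Z. dist b z \<le> R"
  shows "real (card (B::'a set)) \<le> real (card Z) * ball_growth TYPE('a) R"
proof -
  have "B \<subseteq> (\<Union>z\<in>Z. cball z R)"
    using cover by (auto simp: dist_commute)
  then have "card B \<le> card (\<Union>z\<in>Z. cball z R)"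
    by (intro card_mono) (use assms(2) finite_cball_bounded_geometry[OF assms(1)] in auto)
  also have "\<dots> \<le> (\<Sum>z\<in>Z. card (cball z R))"
    by (rule card_UN_le[OF assms(2)])
  finally have "real (card B) \<le> (\<Sum>z\<in>Z. real (card (cball z R)))"
    by (simp flip: of_nat_sum)
  also have "\<dots> \<le> (\<Sum>z\<in>Z. ball_growth TYPE('a) R)"
    by (rule sum_mono) (rule card_cball_le_ball_growth[OF assms(1)])
  finally show ?thesis
    by simp
qed

lemma exists_maximal_separated_subset:
  fixes B :: "'a::metric_space set"
  assumes "finite B" and "0 \<le> R"
  obtains Z where "Z \<subseteq> B" "separated R Z" "\<forall>b\<in>B. \<exists>z\<in>Z. dist b z \<le> R"
proof -
  have "\<exists>Z\<subseteq>B. separated R Z \<and> (\<forall>b\<in>B. \<exists>z\<in>Z. dist b z \<le> R)"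
    using assms(1)
  proof (induction B rule: finite_induct)
    case (insert b B)
    then obtain Z where Z: "Z \<subseteq> B" "separated R Z" "\<forall>b\<in>B. \<exists>z\<in>Z. dist b z \<le> R"
      by blast
    show ?case
    proof (cases "\<exists>z\<in>Z. dist b z \<le> R")
      case True
      then show ?thesis
        using Z by (intro exI[of _ Z]) auto
    next
      case False
      then show ?thesis
        using Z assms(2) unfolding separated_def
        by (intro exI[of _ "insert b Z"]) (auto simp: dist_commute not_le)
    qed
  qed (simp add: separated_def)
  then show thesis
    using that by blast
qed

lemma exists_separated_subset_card_ge:
  assumes bg: "bounded_geometry TYPE('a::metric_space)" and "0 < R"
  obtains Z y where "finite Z" "Z \<subseteq> cball (y::'a) l" "separated R Z"
    "ball_growth TYPE('a) l \<le> real (card Z) * ball_growth TYPE('a) R"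
proof -
  obtain y :: 'a where y: "real (card (cball y l)) = ball_growth TYPE('a) l"
    using ball_growth_attained[OF bg] .
  obtain Z where Z: "Z \<subseteq> cball y l" "separated R Z" "\<forall>b\<in>cball y l. \<exists>z\<in>Z. dist b z \<le> R"
    using exists_maximal_separated_subset[OF finite_cball_bounded_geometry[OF bg]] \<open>0 < R\<close>
    by (metis less_imp_le)
  have "finite Z"
    using Z(1) finite_cball_bounded_geometry[OF bg] finite_subset by blast
  moreover have "ball_growth TYPE('a) l \<le> real (card Z) * ball_growth TYPE('a) R"
    using card_le_card_net_mult_ball_growth[OF bg \<open>finite Z\<close> Z(3)] y by simp
  ultimately show thesis
    using that Z(1,2) by blast
qed

definition discretize :: "(real \<Rightarrow> 'a) \<Rightarrow> real \<Rightarrow> real \<Rightarrow> nat \<Rightarrow> 'a" where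
  "discretize p L \<tau> i = p (min (real i * \<tau>) L)"

definition round_trip :: "(nat \<Rightarrow> 'a) \<Rightarrow> nat \<Rightarrow> nat \<Rightarrow> 'a" where
  "round_trip w K r = w (if r \<le> K then r else 2 * K - r)"

text \<open>Follow \<open>u\<close> for \<open>K0\<close> steps, then make round trips of \<open>2K\<close> steps along \<open>w (c 0)\<close>, \<open>w (c 1)\<close>, \<dots>\<close>

definition excursions :: "(nat \<Rightarrow> 'a) \<Rightarrow> nat \<Rightarrow> ('b \<Rightarrow> nat \<Rightarrow> 'a) \<Rightarrow> nat \<Rightarrow> (nat \<Rightarrow> 'b) \<Rightarrow> nat \<Rightarrow> 'a" where
  "excursions u K0 w K c i = (if i < K0 then u i
     else round_trip (w (c ((i - K0) div (2 * K)))) K ((i - K0) mod (2 * K)))"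

lemma discretize_0: "0 \<le> L \<Longrightarrow> discretize p L \<tau> 0 = p 0"
  by (simp add: discretize_def)

lemma discretize_end: "L \<le> real i * \<tau> \<Longrightarrow> discretize p L \<tau> i = p L"
  by (simp add: discretize_def)

lemma dist_discretize_Suc_le:
  fixes p :: "real \<Rightarrow> 'a::metric_space"
  assumes lip: "\<And>s t. s \<in> {0..L} \<Longrightarrow> t \<in> {0..L} \<Longrightarrow> dist (p s) (p t) \<le> C * \<bar>s - t\<bar> + A"
    and "0 \<le> C" "0 < \<tau>" "0 \<le> L"
  shows "dist (discretize p L \<tau> i) (discretize p L \<tau> (Suc i)) \<le> C * \<tau> + A"
proof -
  let ?s = "min (real i * \<tau>) L" and ?t = "min (real (Suc i) * \<tau>) L"
  have "\<bar>?s - ?t\<bar> \<le> \<tau>"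
    using \<open>0 < \<tau>\<close> by (simp add: min_def algebra_simps)
  then have "C * \<bar>?s - ?t\<bar> \<le> C * \<tau>"
    using \<open>0 \<le> C\<close> by (rule mult_left_mono)
  moreover have "?s \<in> {0..L}" "?t \<in> {0..L}"
    using \<open>0 < \<tau>\<close> \<open>0 \<le> L\<close> by auto
  ultimately show ?thesis
    unfolding discretize_def using lip by fastforce
qed

lemma dist_round_trip_Suc_le:
  fixes w :: "nat \<Rightarrow> 'a::metric_space"
  assumes step: "\<And>i. i < K \<Longrightarrow> dist (w i) (w (Suc i)) \<le> \<delta>" and "r < 2 * K"
  shows "dist (round_trip w K r) (round_trip w K (Suc r)) \<le> \<delta>"
proof (cases "r < K")
  case True
  then show ?thesis
    unfolding round_trip_def using step by simp
next
  case False
  then have "round_trip w K r = w (Suc (2 * K - Suc r))" "round_trip w K (Suc r) = w (2 * K - Suc r)"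
    and "2 * K - Suc r < K"
    using \<open>r < 2 * K\<close> unfolding round_trip_def by (auto simp: Suc_diff_Suc)
  then show ?thesis
    using step[of "2 * K - Suc r"] by (simp add: dist_commute)
qed

lemma dist_concat_loops_Suc_le:
  fixes e :: "nat \<Rightarrow> nat \<Rightarrow> 'a::metric_space"
  assumes "0 < M" and start: "\<And>j. e j 0 = y" and finish: "\<And>j. e j M = y"
    and step: "\<And>j r. r < M \<Longrightarrow> dist (e j r) (e j (Suc r)) \<le> \<delta>"
  shows "dist (e (t div M) (t mod M)) (e (Suc t div M) (Suc t mod M)) \<le> \<delta>"
proof (cases "Suc (t mod M) < M")
  case True
  then have "Suc t div M = t div M" "Suc t mod M = Suc (t mod M)"
    by (simp_all add: div_Suc mod_Suc)
  then show ?thesis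
    using step True by simp
next
  case False
  then have "Suc (t mod M) = M"
    using \<open>0 < M\<close> by (meson Suc_lessI mod_less_divisor)
  moreover from this have "Suc t mod M = 0"
    by (simp add: mod_Suc)
  ultimately show ?thesis
    using step[of "t mod M" "t div M"] start finish by (simp add: \<open>0 < M\<close>)
qed

lemma dist_prefix_Suc_le:
  fixes u v :: "nat \<Rightarrow> 'a::metric_space"
  assumes "u K0 = v 0" and "\<And>i. i < K0 \<Longrightarrow> dist (u i) (u (Suc i)) \<le> \<delta>"
    and "\<And>i. dist (v i) (v (Suc i)) \<le> \<delta>"
  shows "dist (if i < K0 then u i else v (i - K0)) (if Suc i < K0 then u (Suc i) else v (Suc i - K0)) \<le> \<delta>"
proof -
  consider "Suc i < K0" | "Suc i = K0" | "K0 \<le> i"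
    by linarith
  then show ?thesis
  proof cases
    case 1
    then show ?thesis
      using assms(2) by simp
  next
    case 2
    then show ?thesis
      using assms(1) assms(2)[of i] by simp
  next
    case 3
    then have "Suc i - K0 = Suc (i - K0)"
      by simp
    then show ?thesis
      using 3 assms(3) by simp
  qed
qed

lemma excursions_0:
  assumes "u K0 = y" "\<And>b. w b 0 = y"
  shows "excursions u K0 w K c 0 = u 0"
  using assms by (cases "K0 = 0") (auto simp: excursions_def round_trip_def)

lemma excursions_visit:
  assumes "0 < K"
  shows "excursions u K0 w K c (K0 + 2 * K * j + K) = w (c j) K"
proof -
  have "(2 * K * j + K) div (2 * K) = j" "(2 * K * j + K) mod (2 * K) = K"
    using assms by (simp_all add: div_mult_self3 mult.commute)
  then show ?thesis
    unfolding excursions_def round_trip_def by simp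
qed

lemma dist_excursions_Suc_le:
  fixes u :: "nat \<Rightarrow> 'a::metric_space" and w :: "'b \<Rightarrow> nat \<Rightarrow> 'a"
  assumes "0 < K" and "u K0 = y" and w_0: "\<And>b. w b 0 = y"
    and "\<And>i. i < K0 \<Longrightarrow> dist (u i) (u (Suc i)) \<le> \<delta>"
    and w_step: "\<And>b i. i < K \<Longrightarrow> dist (w b i) (w b (Suc i)) \<le> \<delta>"
  shows "dist (excursions u K0 w K c i) (excursions u K0 w K c (Suc i)) \<le> \<delta>"
proof -
  define v where "v t = round_trip (w (c (t div (2 * K)))) K (t mod (2 * K))" for t
  have "dist (v t) (v (Suc t)) \<le> \<delta>" for t
    unfolding v_def
  proof (rule dist_concat_loops_Suc_le[where e = "\<lambda>j. round_trip (w (c j)) K"])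
    show "0 < 2 * K"
      using \<open>0 < K\<close> by simp
    show "round_trip (w (c j)) K 0 = y" "round_trip (w (c j)) K (2 * K) = y" for j
      unfolding round_trip_def using \<open>0 < K\<close> w_0 by simp_all
    show "dist (round_trip (w (c j)) K r) (round_trip (w (c j)) K (Suc r)) \<le> \<delta>" if "r < 2 * K" for j r
      by (rule dist_round_trip_Suc_le[OF _ that]) (rule w_step)
  qed
  moreover have "v 0 = y"
    unfolding v_def round_trip_def by (simp add: w_0)
  moreover have "excursions u K0 w K c = (\<lambda>i. if i < K0 then u i else v (i - K0))"
    unfolding excursions_def v_def by auto
  ultimately show ?thesis
    using assms by (simp only:) (intro dist_prefix_Suc_le; simp)
qed

lemma sep_count_ge_card_pow:
  fixes P :: "'a::metric_space \<Rightarrow> 'a \<Rightarrow> real \<Rightarrow> 'a" and y x0 :: 'a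
  assumes P0: "\<And>x x'. P x x' 0 = x" and P1: "\<And>x x'. P x x' (dist x x') = x'"
    and lip: "\<And>x x' s t. s \<in> {0..dist x x'} \<Longrightarrow> t \<in> {0..dist x x'} \<Longrightarrow> dist (P x x' s) (P x x' t) \<le> C * \<bar>s - t\<bar> + A"
    and "0 \<le> C" "0 < \<tau>" "C * \<tau> + A \<le> \<delta>"
    and "finite Z" and Z_near: "\<And>z. z \<in> Z \<Longrightarrow> dist y z \<le> real K * \<tau>"
    and Z_sep: "separated R Z" and "0 \<le> R" "1 \<le> K"
    and K0: "dist x0 y \<le> real K0 * \<tau>" and "K0 \<le> n"
  shows "ereal (real (card Z ^ ((n - K0) div (2 * K)))) \<le> sep_count n R \<delta> x0"
proof -
  define J where "J = (n - K0) div (2 * K)"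
  define seg where "seg x x' = discretize (P x x') (dist x x') \<tau>" for x x'
  define walk where "walk c = excursions (seg x0 y) K0 (seg y) K c" for c
  have seg_step: "dist (seg x x' i) (seg x x' (Suc i)) \<le> \<delta>" for x x' i
    unfolding seg_def using dist_discretize_Suc_le[OF lip \<open>0 \<le> C\<close> \<open>0 < \<tau>\<close>] \<open>C * \<tau> + A \<le> \<delta>\<close>
    by (meson order_trans zero_le_dist)
  have seg_0: "seg x x' 0 = x" for x x'
    unfolding seg_def by (simp add: discretize_0 P0)
  have seg_end: "seg x x' K' = x'" if "dist x x' \<le> real K' * \<tau>" for x x' K'
    unfolding seg_def using that by (simp add: discretize_end P1)
  have walk_path: "map (walk c) [0..<Suc n] \<in> delta_paths n \<delta> x0" for c
  proof (rule map_upt_in_delta_paths)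
    show "walk c 0 = x0"
      unfolding walk_def using seg_end[OF K0] seg_0 by (simp add: excursions_0)
    show "dist (walk c i) (walk c (Suc i)) \<le> \<delta>" for i
      unfolding walk_def using seg_end[OF K0] seg_0 seg_step \<open>1 \<le> K\<close>
      by (intro dist_excursions_Suc_le) auto
  qed
  have walk_visits: "walk c (K0 + 2 * K * j + K) = c j" if "c j \<in> Z" for c j
    unfolding walk_def using \<open>1 \<le> K\<close> seg_end[OF Z_near[OF that]] by (simp add: excursions_visit)
  have "ereal (real (card (PiE {0..<J} (\<lambda>_. Z)))) \<le> sep_count n R \<delta> x0"
  proof (rule card_le_sep_count[OF _ \<open>0 \<le> R\<close> walk_path])
    show "finite (PiE {0..<J} (\<lambda>_. Z))"
      using \<open>finite Z\<close> by (simp add: finite_PiE)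
    fix c c' assume c: "c \<in> PiE {0..<J} (\<lambda>_. Z)" "c' \<in> PiE {0..<J} (\<lambda>_. Z)" "c \<noteq> c'"
    then obtain j where j: "j < J" "c j \<noteq> c' j"
      by (metis PiE_ext atLeastLessThan_iff zero_le)
    then have cj: "c j \<in> Z" "c' j \<in> Z"
      using c by auto
    have "2 * K * j + K \<le> 2 * K * (j + 1)"
      by simp
    also have "\<dots> \<le> 2 * K * J"
      using j(1) by (intro mult_le_mono2) simp
    also have "\<dots> \<le> n - K0"
      unfolding J_def by simp
    finally have "K0 + 2 * K * j + K \<le> n"
      using \<open>K0 \<le> n\<close> by linarith
    then show "\<exists>i\<le>n. R < dist (map (walk c) [0..<Suc n] ! i) (map (walk c') [0..<Suc n] ! i)"
      using walk_visits cj j Z_sep unfolding separated_def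
      by (intro exI[of _ "K0 + 2 * K * j + K"]) (simp del: upt_Suc)
  qed
  then show ?thesis
    unfolding J_def by (simp add: card_PiE)
qed

lemma sep_rate_ge:
  fixes P :: "'a::metric_space \<Rightarrow> 'a \<Rightarrow> real \<Rightarrow> 'a" and x0 :: 'a
  assumes bg: "bounded_geometry TYPE('a)"
    and P0: "\<And>x x'. P x x' 0 = x" and P1: "\<And>x x'. P x x' (dist x x') = x'"
    and lip: "\<And>x x' s t. s \<in> {0..dist x x'} \<Longrightarrow> t \<in> {0..dist x x'} \<Longrightarrow> dist (P x x' s) (P x x' t) \<le> C * \<bar>s - t\<bar> + A"
    and "0 \<le> C" "0 < \<tau>" "C * \<tau> + A \<le> \<delta>"
    and "0 < c" and growth: "\<And>L. \<exists>l\<ge>L. c \<le> ln (ball_growth TYPE('a) l) / l"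
    and "0 < R"
  shows "ereal (c * \<tau> / 4) \<le> sep_rate R \<delta> x0"
proof -
  define a where "a = ln (ball_growth TYPE('a) R)"
  have "1 \<le> ball_growth TYPE('a) R"
    using ball_growth_ge_1[OF bg] \<open>0 < R\<close> by simp
  then have "0 \<le> a"
    unfolding a_def by simp
  obtain l where l: "max 1 ((2 * a + c * \<tau>) / c) \<le> l" "c \<le> ln (ball_growth TYPE('a) l) / l"
    using growth by blast
  then have "0 < l" and cl: "2 * a + c * \<tau> \<le> c * l"
    using \<open>0 < c\<close> by (auto simp: field_simps)
  obtain Z y where "finite Z" "Z \<subseteq> cball (y::'a) l" "separated R Z"
    and Z_large: "ball_growth TYPE('a) l \<le> real (card Z) * ball_growth TYPE('a) R"
    using exists_separated_subset_card_ge[OF bg \<open>0 < R\<close>] by blast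
  have "1 \<le> ball_growth TYPE('a) l"
    using ball_growth_ge_1[OF bg] \<open>0 < l\<close> by simp
  then have "1 \<le> card Z"
    using Z_large by (cases "card Z = 0") auto
  have "ln (ball_growth TYPE('a) l) \<le> ln (real (card Z) * ball_growth TYPE('a) R)"
    using Z_large \<open>1 \<le> ball_growth TYPE('a) l\<close> by simp
  also have "\<dots> = ln (card Z) + a"
    unfolding a_def using \<open>1 \<le> card Z\<close> \<open>1 \<le> ball_growth TYPE('a) R\<close> by (simp add: ln_mult)
  finally have "ln (ball_growth TYPE('a) l) \<le> ln (card Z) + a" .
  with l(2) \<open>0 < l\<close> have lnZ: "c * l - a \<le> ln (card Z)"
    by (simp add: field_simps)
  define K where "K = nat \<lceil>l / \<tau>\<rceil>"
  have "0 < l / \<tau>"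
    using \<open>0 < l\<close> \<open>0 < \<tau>\<close> by simp
  then have K: "l / \<tau> \<le> real K" "real K \<le> l / \<tau> + 1" "1 \<le> K"
    unfolding K_def by (auto intro: of_int_ceiling_le_add_one simp: Suc_le_eq)
  define K0 where "K0 = nat \<lceil>dist x0 y / \<tau>\<rceil>"
  have "dist x0 y / \<tau> \<le> real K0"
    unfolding K0_def by linarith
  then have "dist x0 y \<le> real K0 * \<tau>"
    using \<open>0 < \<tau>\<close> by (simp add: field_simps)
  moreover have "dist y z \<le> real K * \<tau>" if "z \<in> Z" for z
    using that \<open>Z \<subseteq> cball y l\<close> K(1) \<open>0 < \<tau>\<close> by (auto simp: field_simps)
  ultimately have "ereal (ln (real (card Z)) / real (2 * K)) \<le> sep_rate R \<delta> x0"
    unfolding sep_rate_def using \<open>1 \<le> card Z\<close> \<open>1 \<le> K\<close> \<open>0 < R\<close>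
    by (intro limsup_ln_div_ge_of_pow_bound[where m = K0]
        sep_count_ge_card_pow[OF P0 P1 lip \<open>0 \<le> C\<close> \<open>0 < \<tau>\<close> \<open>C * \<tau> + A \<le> \<delta>\<close> \<open>finite Z\<close> _ \<open>separated R Z\<close>]) auto
  moreover have "c * \<tau> / 4 \<le> ln (real (card Z)) / real (2 * K)"
  proof -
    have "c * \<tau> / 4 * real (2 * K) \<le> c * \<tau> / 2 * (l / \<tau> + 1)"
      using K(2) \<open>0 < c\<close> \<open>0 < \<tau>\<close> by (simp add: mult_left_mono)
    also have "\<dots> = c * l / 2 + c * \<tau> / 2"
      using \<open>0 < \<tau>\<close> by (simp add: field_simps)
    also have "\<dots> \<le> ln (real (card Z))"
      using lnZ cl by linarith
    finally show ?thesis
      using \<open>1 \<le> K\<close> by (simp add: field_simps)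
  qed
  ultimately show ?thesis
    using order_trans ereal_less_eq(3) by blast
qed

text \<open>Only the upper half of the quasigeodesic inequality is needed.\<close>

lemma quasigeodesic_paths:
  assumes "quasigeodesic TYPE('a::metric_space)"
  obtains C A and P :: "'a::metric_space \<Rightarrow> 'a \<Rightarrow> real \<Rightarrow> 'a" where "1 \<le> C" "0 \<le> A"
    "\<And>x x'. P x x' 0 = x" "\<And>x x'. P x x' (dist x x') = x'"
    "\<And>x x' s t. s \<in> {0..dist x x'} \<Longrightarrow> t \<in> {0..dist x x'} \<Longrightarrow> dist (P x x' s) (P x x' t) \<le> C * \<bar>s - t\<bar> + A"
proof -
  obtain C A :: real where "1 \<le> C" "0 \<le> A" and paths: "\<forall>x x'::'a. \<exists>p. p 0 = x \<and> p (dist x x') = x' \<and>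
      (\<forall>s\<in>{0..dist x x'}. \<forall>t\<in>{0..dist x x'}. dist (p s) (p t) \<le> C * \<bar>s - t\<bar> + A)"
    using assms unfolding quasigeodesic_def by (metis (no_types, lifting))
  then obtain P where "\<forall>x x'::'a. P x x' 0 = x \<and> P x x' (dist x x') = x' \<and>
      (\<forall>s\<in>{0..dist x x'}. \<forall>t\<in>{0..dist x x'}. dist (P x x' s) (P x x' t) \<le> C * \<bar>s - t\<bar> + A)"
    by metis
  with \<open>1 \<le> C\<close> \<open>0 \<le> A\<close> show thesis
    using that by blast
qed

lemma Limsup_pos_imp_frequently_ge:
  fixes f :: "real \<Rightarrow> real"
  assumes "0 < Limsup at_top (\<lambda>l. ereal (f l))"
  obtains c where "0 < c" "\<And>L. \<exists>l\<ge>L. c \<le> f l"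
proof -
  obtain y where "0 < y" and not_ev: "\<not> eventually (\<lambda>l. ereal (f l) < y) at_top"
    using assms Limsup_le_iff[of at_top "\<lambda>l. ereal (f l)" 0] by (auto simp: not_le)
  obtain c where "0 < ereal c" "ereal c < y"
    using ereal_dense2[OF \<open>0 < y\<close>] by blast
  have "\<exists>l\<ge>L. c \<le> f l" for L
  proof -
    obtain l where "L \<le> l" "y \<le> ereal (f l)"
      using not_ev unfolding eventually_at_top_linorder by (auto simp: not_less)
    moreover from this have "ereal c \<le> ereal (f l)"
      using \<open>ereal c < y\<close> by (meson less_le_trans less_imp_le)
    ultimately show ?thesis
      by auto
  qed
  with \<open>0 < ereal c\<close> show thesis
    using that by simp
qed

lemma Lim_sep_rate_ge:
  assumes "0 \<le> \<delta>" and "\<And>R. 0 < R \<Longrightarrow> M \<le> sep_rate R \<delta> x0"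
  shows "M \<le> Lim at_top (\<lambda>R. sep_rate R \<delta> x0)"
proof -
  have "\<forall>\<^sub>F R in at_top. M \<le> sep_rate R \<delta> x0"
    using eventually_gt_at_top[of 0] by eventually_elim (rule assms(2))
  then have "M \<le> (INF R. sep_rate R \<delta> x0)"
    by (rule tendsto_lowerbound[OF sep_rate_tendsto_INF[OF assms(1)]]) simp
  also have "\<dots> = Lim at_top (\<lambda>R. sep_rate R \<delta> x0)"
    by (rule tendsto_Lim[symmetric, OF _ sep_rate_tendsto_INF[OF assms(1)]]) simp
  finally show ?thesis .
qed

lemma coarse_entropy_eq_PInfty:
  assumes qg: "quasigeodesic TYPE('a::metric_space)" and bg: "bounded_geometry TYPE('a)"
    and "0 < Limsup at_top (\<lambda>l. ereal (ln (ball_growth TYPE('a) l) / l))"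
  shows "coarse_entropy (x0::'a) = \<infinity>"
proof -
  obtain C A and P :: "'a \<Rightarrow> 'a \<Rightarrow> real \<Rightarrow> 'a" where "1 \<le> C" "0 \<le> A"
    and P0: "\<And>x x'. P x x' 0 = x" and P1: "\<And>x x'. P x x' (dist x x') = x'"
    and lip: "\<And>x x' s t. s \<in> {0..dist x x'} \<Longrightarrow> t \<in> {0..dist x x'} \<Longrightarrow> dist (P x x' s) (P x x' t) \<le> C * \<bar>s - t\<bar> + A"
    using quasigeodesic_paths[OF qg] by metis
  obtain c where "0 < c" and growth: "\<And>L. \<exists>l\<ge>L. c \<le> ln (ball_growth TYPE('a) l) / l"
    using Limsup_pos_imp_frequently_ge[OF assms(3)] by blast
  have lower: "ereal (c * ((\<delta> - A) / C) / 4) \<le> Lim at_top (\<lambda>R. sep_rate R \<delta> x0)" if "A + C \<le> \<delta>" for \<delta>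
  proof (rule Lim_sep_rate_ge)
    have "1 \<le> (\<delta> - A) / C"
      using that \<open>1 \<le> C\<close> by (simp add: field_simps)
    then show "ereal (c * ((\<delta> - A) / C) / 4) \<le> sep_rate R \<delta> x0" if "0 < R" for R
      using \<open>1 \<le> C\<close> \<open>0 < c\<close> \<open>0 < R\<close>
      by (intro sep_rate_ge[OF bg P0 P1 lip _ _ _ _ growth]) auto
  qed (use that \<open>1 \<le> C\<close> \<open>0 \<le> A\<close> in simp)
  have "filterlim (\<lambda>\<delta>. c * ((\<delta> - A) / C) / 4) at_top at_top"
    using \<open>0 < c\<close> \<open>1 \<le> C\<close> by real_asymp
  then have unbounded: "\<forall>\<^sub>F \<delta> in at_top. ereal r < ereal (c * ((\<delta> - A) / C) / 4)" for r
    by (simp add: tendsto_PInfty_eq_at_top[symmetric] tendsto_PInfty)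
  have "((\<lambda>\<delta>. Lim at_top (\<lambda>R. sep_rate R \<delta> x0)) \<longlongrightarrow> \<infinity>) at_top"
    unfolding tendsto_PInfty
  proof
    fix r
    show "\<forall>\<^sub>F \<delta> in at_top. ereal r < Lim at_top (\<lambda>R. sep_rate R \<delta> x0)"
      using unbounded[of r] eventually_ge_at_top[of "A + C"]
      by eventually_elim (use lower less_le_trans in blast)
  qed
  then show ?thesis
    unfolding coarse_entropy_eq_Lim_sep_rate by (intro tendsto_Lim) auto
qed

theorem mainTheorem16:
  assumes "quasigeodesic TYPE('a::metric_space)"
    and "bounded_geometry TYPE('a)"
  shows "(((\<lambda>l. ln (ball_growth TYPE('a) l) / l) \<longlongrightarrow> 0) at_top
            \<longrightarrow> (\<forall>x0::'a. coarse_entropy x0 = 0))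
       \<and> (Limsup at_top (\<lambda>l. ereal (ln (ball_growth TYPE('a) l) / l)) > 0
            \<longrightarrow> (\<forall>x0::'a. coarse_entropy x0 = \<infinity>))"
  using coarse_entropy_eq_0[OF assms(2)] coarse_entropy_eq_PInfty[OF assms] by blast

end
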